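(* Let $k$ be a finite field with $q$ elements. Let $f=p^d\in V_n$, where $p$ is an irreducible homogeneous polynomial and $d\ge1$, so that $R(f)$ is an indecomposable regular representation. Suppose that the map $V_{n-1}\to V_n/\langle f\rangle$ given by multiplication by $y$ is not bijective. Then the quiver $|R(f)|$ has exactly one loop, and this loop is at the vertex $0$. Moreover, after removing this loop, $|R(f)|$ is a directed tree with the following properties: 1. no arrow starts at $0$; 2. at every vertex other than $0$ exactly one arrow starts; 3. at every vertex other than $0$ either exactly $q$ arrows end or none end, and at $0$ exactly $q-1$ arrows end; 4. every vertex at which no arrow ends is connected to $0$ by a unique directed path, and this path has length $d$.
   Context: A quiver is a quadruple $(\Gamma_0,\Gamma_1,s,t)$ with vertex set $\Gamma_0$, arrow set $\Gamma_1$, and start and terminus maps $s,t$. For a linear Kronecker representation $f,g\colon X_1\to X_0$, the quiver $|X|$ has vertices $X_0$, arrows $X_1$, $s=f$ and $t=g$. $V_n\subset k[x,y]$ is the space of homogeneous polynomials of degree $n$, with $V_{-1}=0$. For $0\ne f\in V_n$, $R(f)$ is the representation $V_{n-1}\rightrightarrows V_n/\langle f\rangle$ whose first map is multiplication by $x$ and whose second map is multiplication by $y$, each followed by the projection. *)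

theory Defs
  imports "HOL-Computational_Algebra.Polynomial_Factorial" "Graph_Theory.Graph_Theory"
begin

text \<open>Bivariate polynomials k[x,y] are modelled as k[x][y], i.e. the type 'a poly poly:
  the outer variable is y, the inner variable is x. So coeff (coeff P j) i is the
  coefficient of x^i y^j.\<close>

definition varX :: "'a::comm_ring_1 poly poly" where
  "varX = [:[:0, 1:]:]"

definition varY :: "'a::comm_ring_1 poly poly" where
  "varY = [:0, 1:]"

text \<open>V n: homogeneous polynomials of degree n (n an integer; V (-1) = 0).\<close>
definition hom :: "int \<Rightarrow> 'a::comm_ring_1 poly poly set" where
  "hom n = {P. \<forall>i j. coeff (coeff P j) i \<noteq> 0 \<longrightarrow> int (i + j) = n}"

text \<open>The class of g in V_n / <f>, where <f> is the k-linear span of f.\<close>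
definition cls :: "'a::comm_ring_1 poly poly \<Rightarrow> 'a poly poly \<Rightarrow> 'a poly poly set" where
  "cls f g = {g + [:[:c:]:] * f | c. True}"

text \<open>The quiver |R(f)| of the Kronecker representation
  R(f): V_{n-1} \<rightrightarrows> V_n/<f> (first map: multiplication by x, second: by y).\<close>
definition quiverR :: "int \<Rightarrow> 'a::comm_ring_1 poly poly \<Rightarrow> ('a poly poly set, 'a poly poly) pre_digraph" where
  "quiverR n f = \<lparr> verts = cls f ` hom n, arcs = hom (n - 1),
                   tail = (\<lambda>g. cls f (varX * g)), head = (\<lambda>g. cls f (varY * g)) \<rparr>"

text \<open>Undirected walks in a quiver: each step uses an arrow either forwards (True)
  or backwards (False).\<close>
fun ucas :: "('v,'e) pre_digraph \<Rightarrow> 'v \<Rightarrow> ('e \<times> bool) list \<Rightarrow> 'v \<Rightarrow> bool" where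
  "ucas G u [] v = (u = v)"
| "ucas G u ((e, b) # es) v =
     ((if b then tail G e else head G e) = u \<and> ucas G (if b then head G e else tail G e) es v)"

text \<open>Underlying undirected multigraph has no cycle: no nonempty closed walk using
  pairwise distinct arrows (loops and parallel arrows count as cycles).\<close>
definition uacyclic :: "('v,'e) pre_digraph \<Rightarrow> bool" where
  "uacyclic G \<longleftrightarrow> \<not> (\<exists>u es. u \<in> verts G \<and> es \<noteq> [] \<and> fst ` set es \<subseteq> arcs G
                       \<and> distinct (map fst es) \<and> ucas G u es u)"

definition directed_tree :: "('v,'e) pre_digraph \<Rightarrow> bool" where
  "directed_tree G \<longleftrightarrow> connected G \<and> uacyclic G"

end

theory Submission
  imports Defs
begin

text \<open>If y does not divide f, multiplication by y is a bijection from V_{n-1} onto V_n/<f>.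
  So y divides p^d, and irreducibility of p forces p = c y, f = C y^d and n = d; scaling f does
  not change the quiver, so we may take f = y^d.

  The order of vanishing along y = 0 of a
  representative, capped at d, is an invariant of the class; it is unchanged by x and raised by
  one by y, so d minus it is a rank that drops by one along every arc except the loop at 0.
  Multiplication by x is injective modulo y^d and reaches every nonzero class, so every vertex
  other than 0 has exactly one outgoing arc. A digraph with these two properties is a tree
  directed towards its root, in which a vertex of rank r is joined to the root by a unique path
  of length r. A class [h] receives arcs iff y divides h, and then its incoming arcs form a coset
  of the line through y^{d-1}, hence number q (q - 1 at 0 once the loop is removed); if y does
  not divide h, the class has rank d.\<close>

section \<open>Rooted in-trees\<close>

lemma ucas_append: "ucas G u (xs @ ys) v \<longleftrightarrow> (\<exists>w. ucas G u xs w \<and> ucas G w ys v)"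
  by (induction xs arbitrary: u) (auto, blast+)

lemma ucas_rotate: "ucas G u (xs @ ys) u \<Longrightarrow> \<exists>w. ucas G w (ys @ xs) w"
  by (auto simp: ucas_append)

lemma ucas_closed_tail_touches:
  assumes walk: "ucas G u ((e, b) # es) u" and "es \<noteq> []"
  shows "\<exists>x\<in>set es. tail G e = tail G (fst x) \<or> tail G e = head G (fst x)"
proof (cases b)
  case True
  obtain es' e' b' where "es = es' @ [(e', b')]" using \<open>es \<noteq> []\<close> by (metis rev_exhaust surj_pair)
  with walk True show ?thesis by (auto simp: ucas_append split: if_splits)
next
  case False
  obtain e' b' es' where "es = (e', b') # es'" using \<open>es \<noteq> []\<close> by (metis list.exhaust surj_pair)
  with walk False show ?thesis by (auto split: if_splits)
qed

locale ranked_in_tree = wf_digraph G for G :: "('v, 'e) pre_digraph" +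
  fixes root :: 'v and rank :: "'v \<Rightarrow> nat"
  assumes root_in_verts: "root \<in> verts G"
    and out_arc_exists: "v \<in> verts G \<Longrightarrow> v \<noteq> root \<Longrightarrow> \<exists>e\<in>arcs G. tail G e = v"
    and inj_on_tail: "inj_on (tail G) (arcs G)"
    and rank_tail: "e \<in> arcs G \<Longrightarrow> rank (tail G e) = Suc (rank (head G e))"
    and rank_root: "rank root = 0"
begin

lemma tail_neq_root:
  assumes "e \<in> arcs G" shows "tail G e \<noteq> root"
  using rank_tail[OF assms] rank_root by auto

lemma rank_awalk: "awalk u p v \<Longrightarrow> rank u = length p + rank v"
proof (induction p arbitrary: u)
  case Nil
  then show ?case by (simp add: awalk_Nil_iff)
next
  case (Cons e p)
  then have "e \<in> arcs G" "u = tail G e" "awalk (head G e) p v" by (simp_all add: awalk_Cons_iff)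
  with Cons.IH rank_tail show ?case by simp
qed

lemma awalk_to_root_unique: "awalk u p root \<Longrightarrow> awalk u p' root \<Longrightarrow> p = p'"
proof (induction p arbitrary: u p')
  case Nil
  then have u: "u = root" by (simp add: awalk_Nil_iff)
  show ?case
  proof (cases p')
    case (Cons e' p'')
    with Nil.prems(2) u have "e' \<in> arcs G" "tail G e' = root" by (simp_all add: awalk_Cons_iff)
    then show ?thesis using tail_neq_root by blast
  qed simp
next
  case (Cons e p)
  then have e: "e \<in> arcs G" "u = tail G e" "awalk (head G e) p root"
    by (simp_all add: awalk_Cons_iff)
  then have "u \<noteq> root" using tail_neq_root by blast
  with Cons.prems(2) obtain e' p'' where p': "p' = e' # p''"
    by (cases p') (simp_all add: awalk_Nil_iff)
  with Cons.prems(2) have e': "e' \<in> arcs G" "u = tail G e'" "awalk (head G e') p'' root"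
    by (simp_all add: awalk_Cons_iff)
  have "e' = e" using inj_onD[OF inj_on_tail _ e'(1) e(1)] e(2) e'(2) by simp
  then show ?case using Cons.IH[OF e(3)] e'(3) p' by simp
qed

lemma awalk_to_root_exists: "u \<in> verts G \<Longrightarrow> \<exists>p. awalk u p root"
proof (induction "rank u" arbitrary: u rule: less_induct)
  case less
  show ?case
  proof (cases "u = root")
    case True
    with less.prems have "awalk u [] root" by (simp add: awalk_Nil_iff)
    then show ?thesis ..
  next
    case False
    then obtain e where e: "e \<in> arcs G" "tail G e = u" using out_arc_exists less.prems by blast
    then have "rank (head G e) < rank u" using rank_tail[OF e(1)] by simp
    then obtain p where "awalk (head G e) p root" using less.hyps[OF _ head_in_verts[OF e(1)]] by blast
    with e have "awalk u (e # p) root" by (simp add: awalk_Cons_iff)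
    then show ?thesis ..
  qed
qed

lemma apath_to_root:
  assumes "u \<in> verts G"
  shows "\<exists>p. apath u p root \<and> length p = rank u \<and> (\<forall>p'. apath u p' root \<longrightarrow> p' = p)"
proof -
  obtain p where p: "awalk u p root" using awalk_to_root_exists assms by blast
  have unique: "p' = p" if "apath u p' root" for p'
    using awalk_to_root_unique[OF awalkI_apath[OF that] p] .
  have "apath u (awalk_to_apath p) root" using p by (rule apath_awalk_to_apath)
  then have "apath u p root" using unique by metis
  moreover have "length p = rank u" using rank_awalk[OF p] rank_root by simp
  ultimately show ?thesis using unique by blast
qed

lemma connected: "connected G"
proof (rule connectedI)
  show "verts G \<noteq> {}" using root_in_verts by blast
next
  interpret S: pair_wf_digraph "mk_symmetric G" ..
  have to_root: "u \<rightarrow>\<^sup>*\<^bsub>mk_symmetric G\<^esub> root" if "u \<in> verts G" for u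
    using awalk_to_root_exists[of u] that by (meson reachable_awalkI reachable_mk_symmetricI)
  fix u v assume "u \<in> verts G" "v \<in> verts G"
  then show "u \<rightarrow>\<^sup>*\<^bsub>mk_symmetric G\<^esub> v"
    by (meson S.reachable_trans symmetric_mk_symmetric symmetric_reachable to_root)
qed

lemma uacyclic: "uacyclic G"
  unfolding uacyclic_def
proof clarify
  fix u es
  assume es: "es \<noteq> []" "fst ` set es \<subseteq> arcs G" "distinct (map fst es)" and walk: "ucas G u es u"
  txt \<open>Take a cycle arc e whose tail has maximal rank. Another cycle arc meets tail e; it cannot
    leave tail e, since out-arcs are unique, nor enter it, since its own tail would rank higher.\<close>
  let ?\<rho> = "\<lambda>x. rank (tail G (fst x))"
  have "Max (?\<rho> ` set es) \<in> ?\<rho> ` set es" by (intro Max_in) (simp_all add: es(1))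
  then obtain x where top_eq: "Max (?\<rho> ` set es) = ?\<rho> x" and top_in: "x \<in> set es"
    by (rule imageE)
  have top: "?\<rho> y \<le> ?\<rho> x" if "y \<in> set es" for y
    unfolding top_eq[symmetric] by (rule Max_ge[OF finite_imageI[OF finite_set] imageI[OF that]])
  obtain e b where eb: "x = (e, b)" by (cases x)
  obtain es1 es2 where split: "es = es1 @ (e, b) # es2" using split_list[OF top_in] eb by blast
  have "ucas G u (es1 @ (e, b) # es2) u" using walk unfolding split .
  from ucas_rotate[OF this] obtain w where rotated: "ucas G w ((e, b) # es2 @ es1) w" by auto
  have e: "e \<in> arcs G" using top_in eb es(2) by force
  have "es2 @ es1 \<noteq> []"
  proof
    assume "es2 @ es1 = []"
    with rotated have "tail G e = head G e" by (cases b) simp_all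
    with rank_tail[OF e] show False by simp
  qed
  then obtain y where y: "y \<in> set (es2 @ es1)"
    and touch: "tail G e = tail G (fst y) \<or> tail G e = head G (fst y)"
    using ucas_closed_tail_touches[OF rotated] by blast
  have y_es: "y \<in> set es" using y unfolding split by auto
  then have y_arc: "fst y \<in> arcs G" using es(2) by blast
  have "e \<notin> fst ` set (es2 @ es1)" using es(3) unfolding split by auto
  with y have "fst y \<noteq> e" by (metis imageI)
  then have "tail G (fst y) \<noteq> tail G e" using inj_onD[OF inj_on_tail _ y_arc e] by blast
  with touch have "tail G e = head G (fst y)" by simp
  with rank_tail[OF y_arc] top[OF y_es] eb show False by simp
qed

lemma directed_tree: "directed_tree G"
  using connected uacyclic by (simp add: directed_tree_def)

lemma out_degree_root: "out_degree G root = 0"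
proof -
  have "out_arcs G root = {}" using tail_neq_root by (auto simp: out_arcs_def)
  then show ?thesis by (simp add: out_degree_def)
qed

lemma out_degree_nonroot:
  assumes "v \<in> verts G" "v \<noteq> root" shows "out_degree G v = 1"
proof -
  obtain e where "e \<in> arcs G" "tail G e = v" using out_arc_exists assms by blast
  with inj_on_tail have "out_arcs G v = {e}" by (auto simp: out_arcs_def inj_on_def)
  then show ?thesis by (simp add: out_degree_def)
qed

end

section \<open>Homogeneous polynomials in k[x][y]\<close>

definition bcoeff :: "'a::zero poly poly \<Rightarrow> nat \<Rightarrow> nat \<Rightarrow> 'a" where
  "bcoeff P i j = coeff (coeff P j) i"

lemma poly_poly_eq_iff: "P = Q \<longleftrightarrow> (\<forall>i j. bcoeff P i j = bcoeff Q i j)"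
  by (auto simp: bcoeff_def poly_eq_iff)

lemma bcoeff_add [simp]: "bcoeff (P + Q) i j = bcoeff P i j + bcoeff Q i j"
  and bcoeff_0 [simp]: "bcoeff 0 i j = 0"
  and bcoeff_smult_const [simp]: "bcoeff (smult [:c:] P) i j = c * bcoeff P i j"
  by (simp_all add: bcoeff_def)

lemma bcoeff_varX_mult: "bcoeff (varX * P) i j = (if i = 0 then 0 else bcoeff P (i - 1) j)"
  by (cases i) (simp_all add: bcoeff_def varX_def)

lemma bcoeff_varY_mult: "bcoeff (varY * P) i j = (if j = 0 then 0 else bcoeff P i (j - 1))"
  by (cases j) (simp_all add: bcoeff_def varY_def)

lemma bcoeff_varY_power:
  "bcoeff (varY ^ d :: 'a::comm_ring_1 poly poly) i j = (if i = 0 \<and> j = d then 1 else 0)"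
proof (induction d arbitrary: j)
  case 0
  then show ?case by (cases j) (auto simp: bcoeff_def)
qed (auto simp: bcoeff_varY_mult)

lemma hom_iff: "P \<in> hom n \<longleftrightarrow> (\<forall>i j. bcoeff P i j \<noteq> 0 \<longrightarrow> int (i + j) = n)"
  by (simp add: hom_def bcoeff_def)

lemma zero_in_hom: "0 \<in> hom n"
  by (simp add: hom_iff)

lemma hom_add:
  assumes "P \<in> hom n" and "Q \<in> hom n"
  shows "P + Q \<in> hom n"
  unfolding hom_iff
proof (intro allI impI)
  fix i j assume "bcoeff (P + Q) i j \<noteq> 0"
  then have "bcoeff P i j \<noteq> 0 \<or> bcoeff Q i j \<noteq> 0" by auto
  with assms show "int (i + j) = n" by (auto simp: hom_iff)
qed

lemma hom_const_mult:
  assumes "P \<in> hom n"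
  shows "[:[:c:]:] * P \<in> hom n"
  unfolding hom_iff
proof (intro allI impI)
  fix i j assume "bcoeff ([:[:c:]:] * P) i j \<noteq> 0"
  then have "bcoeff P i j \<noteq> 0" by auto
  with assms show "int (i + j) = n" by (auto simp: hom_iff)
qed

lemma varX_mult_in_hom_iff: "varX * P \<in> hom n \<longleftrightarrow> P \<in> hom (n - 1)"
proof
  assume XP: "varX * P \<in> hom n"
  show "P \<in> hom (n - 1)" unfolding hom_iff
  proof (intro allI impI)
    fix i j assume "bcoeff P i j \<noteq> 0"
    then have "bcoeff (varX * P) (Suc i) j \<noteq> 0" by (simp add: bcoeff_varX_mult)
    with XP have "int (Suc i + j) = n" unfolding hom_iff by blast
    then show "int (i + j) = n - 1" by simp
  qed
next
  assume P: "P \<in> hom (n - 1)"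
  show "varX * P \<in> hom n" unfolding hom_iff
  proof (intro allI impI)
    fix i j assume "bcoeff (varX * P) i j \<noteq> 0"
    then have "i \<noteq> 0" "bcoeff P (i - 1) j \<noteq> 0" by (simp_all add: bcoeff_varX_mult split: if_splits)
    with P have "int (i - 1 + j) = n - 1" unfolding hom_iff by blast
    with \<open>i \<noteq> 0\<close> show "int (i + j) = n" by linarith
  qed
qed

lemma varY_mult_in_hom_iff: "varY * P \<in> hom n \<longleftrightarrow> P \<in> hom (n - 1)"
proof
  assume YP: "varY * P \<in> hom n"
  show "P \<in> hom (n - 1)" unfolding hom_iff
  proof (intro allI impI)
    fix i j assume "bcoeff P i j \<noteq> 0"
    then have "bcoeff (varY * P) i (Suc j) \<noteq> 0" by (simp add: bcoeff_varY_mult)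
    with YP have "int (i + Suc j) = n" unfolding hom_iff by blast
    then show "int (i + j) = n - 1" by simp
  qed
next
  assume P: "P \<in> hom (n - 1)"
  show "varY * P \<in> hom n" unfolding hom_iff
  proof (intro allI impI)
    fix i j assume "bcoeff (varY * P) i j \<noteq> 0"
    then have "j \<noteq> 0" "bcoeff P i (j - 1) \<noteq> 0" by (simp_all add: bcoeff_varY_mult split: if_splits)
    with P have "int (i + (j - 1)) = n - 1" unfolding hom_iff by blast
    with \<open>j \<noteq> 0\<close> show "int (i + j) = n" by linarith
  qed
qed

lemma varY_power_in_hom: "varY ^ d \<in> hom (int d)"
  by (auto simp: hom_iff bcoeff_varY_power split: if_splits)

text \<open>A homogeneous polynomial has at most one monomial in each row and in each column of its
  coefficient grid, so a single multiple of P clears both the row and the column of Q through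
  a nonzero coefficient of P.\<close>
lemma hom_eliminate:
  fixes P Q :: "'a::field poly poly"
  assumes P: "P \<in> hom n" and Q: "Q \<in> hom n" and Pij: "bcoeff P i j \<noteq> 0"
  obtains c where "Q + [:[:c:]:] * P \<in> hom n"
    and "\<And>i'. bcoeff (Q + [:[:c:]:] * P) i' j = 0" and "\<And>j'. bcoeff (Q + [:[:c:]:] * P) i j' = 0"
proof -
  define c where "c = - bcoeff Q i j / bcoeff P i j"
  have n: "int (i + j) = n" using P Pij by (simp add: hom_iff)
  have "bcoeff (Q + [:[:c:]:] * P) i' j' = 0" if "i' = i \<or> j' = j" for i' j'
  proof (cases "i' = i \<and> j' = j")
    case True
    then show ?thesis using Pij by (simp add: c_def)
  next
    case False
    with that n have "int (i' + j') \<noteq> n" by auto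
    with P Q have "bcoeff P i' j' = 0" "bcoeff Q i' j' = 0" by (auto simp: hom_iff)
    then show ?thesis by simp
  qed
  moreover have "Q + [:[:c:]:] * P \<in> hom n" by (intro hom_add hom_const_mult P Q)
  ultimately show ?thesis by (intro that) auto
qed

lemma varX_nonzero: "(varX :: 'a::comm_ring_1 poly poly) \<noteq> 0"
  by (simp add: varX_def)

lemma varY_dvd_iff_coeff_0: "varY dvd (P :: 'a::comm_ring_1 poly poly) \<longleftrightarrow> coeff P 0 = 0"
  using poly_eq_0_iff_dvd[of P 0] by (simp add: poly_0_coeff_0 varY_def)

lemma varY_dvd_iff: "varY dvd (P :: 'a::comm_ring_1 poly poly) \<longleftrightarrow> (\<forall>i. bcoeff P i 0 = 0)"
  by (simp add: varY_dvd_iff_coeff_0 bcoeff_def poly_eq_iff)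

lemma varX_dvd_iff: "varX dvd (P :: 'a::field poly poly) \<longleftrightarrow> (\<forall>j. bcoeff P 0 j = 0)"
proof
  assume "varX dvd P"
  then show "\<forall>j. bcoeff P 0 j = 0" by (auto simp: bcoeff_varX_mult)
next
  assume P: "\<forall>j. bcoeff P 0 j = 0"
  define Q where "Q = map_poly (\<lambda>a. a div [:0, 1:]) P"
  have "coeff (varX * Q) j = coeff P j" for j
  proof -
    have "[:0, 1:] dvd coeff P j"
      using P dvd_iff_poly_eq_0[of 0 "coeff P j"] by (simp add: bcoeff_def poly_0_coeff_0)
    then have "[:0, 1:] * (coeff P j div [:0, 1:]) = coeff P j" by (rule dvd_mult_div_cancel)
    then show ?thesis by (simp add: Q_def coeff_map_poly varX_def)
  qed
  then have "P = varX * Q" by (simp add: poly_eq_iff)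
  then show "varX dvd P" by simp
qed

lemma prime_elem_varY: "prime_elem (varY :: 'a::idom poly poly)"
proof (rule prime_elemI)
  show "varY \<noteq> (0 :: 'a poly poly)" by (simp add: varY_def)
  show "\<not> varY dvd (1 :: 'a poly poly)" by (simp add: varY_dvd_iff_coeff_0)
  fix a b :: "'a poly poly" assume "varY dvd a * b"
  then show "varY dvd a \<or> varY dvd b" by (simp add: varY_dvd_iff_coeff_0 coeff_mult_0)
qed

lemma irreducible_varY_dvd:
  fixes p :: "'a::field poly poly"
  assumes "irreducible p" and "varY dvd p"
  obtains c where "c \<noteq> 0" and "p = [:[:c:]:] * varY"
proof -
  obtain u where p: "p = varY * u" using assms(2) by (rule dvdE)
  have "\<not> is_unit (varY :: 'a poly poly)" by (auto simp: is_unit_poly_iff varY_def)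
  with assms(1) p have "is_unit u" by (auto dest: irreducibleD)
  then obtain c where "u = [:[:c:]:]" and "c dvd 1" by (auto simp: is_unit_poly_iff)
  with p show ?thesis by (intro that) (auto simp: mult.commute)
qed

section \<open>Reduction to powers of y\<close>

lemma const_mult_add: "[:[:a:]:] * P + [:[:b:]:] * P = [:[:a + b:]:] * (P :: 'a::comm_ring_1 poly poly)"
  by (simp add: smult_add_left[symmetric])

lemma self_in_cls: "g \<in> cls f g"
  by (auto simp: cls_def intro: exI[of _ 0])

lemma cls_eq_iff: "cls f a = cls f b \<longleftrightarrow> (\<exists>c. a = b + [:[:c:]:] * f)"
proof
  assume "cls f a = cls f b"
  with self_in_cls[of a f] show "\<exists>c. a = b + [:[:c:]:] * f" by (auto simp: cls_def)
next
  assume "\<exists>c. a = b + [:[:c:]:] * f"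
  then obtain c where a: "a = b + [:[:c:]:] * f" ..
  show "cls f a = cls f b"
    unfolding cls_def
  proof safe
    fix k
    have "a + [:[:k:]:] * f = b + [:[:c + k:]:] * f"
      by (simp only: a add.assoc const_mult_add)
    then show "\<exists>k'. a + [:[:k:]:] * f = b + [:[:k':]:] * f \<and> True" by blast
    have "b + [:[:k:]:] * f = a + [:[:k - c:]:] * f"
      by (simp only: a add.assoc const_mult_add) simp
    then show "\<exists>k'. b + [:[:k:]:] * f = a + [:[:k':]:] * f \<and> True" by blast
  qed
qed

lemma cls_const_mult:
  fixes f :: "'a::field poly poly"
  assumes "C \<noteq> 0"
  shows "cls ([:[:C:]:] * f) = cls f"
proof
  fix g
  show "cls ([:[:C:]:] * f) g = cls f g"
    unfolding cls_def
  proof safe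
    fix c
    show "\<exists>c'. g + [:[:c:]:] * ([:[:C:]:] * f) = g + [:[:c':]:] * f \<and> True"
      by (rule exI[of _ "c * C"]) simp
    show "\<exists>c'. g + [:[:c:]:] * f = g + [:[:c':]:] * ([:[:C:]:] * f) \<and> True"
      using assms by (intro exI[of _ "c / C"]) simp
  qed
qed

lemma quiverR_const_mult:
  fixes f :: "'a::field poly poly"
  assumes "C \<noteq> 0"
  shows "quiverR n ([:[:C:]:] * f) = quiverR n f"
  using cls_const_mult[OF assms] by (simp add: quiverR_def)

lemma bij_head_if_not_varY_dvd:
  fixes f :: "'a::field poly poly"
  assumes f: "f \<in> hom n" and not_dvd: "\<not> varY dvd f"
  shows "bij_betw (head (quiverR n f)) (arcs (quiverR n f)) (verts (quiverR n f))"
proof -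
  obtain i where fi: "bcoeff f i 0 \<noteq> 0" using not_dvd by (auto simp: varY_dvd_iff)
  have "inj_on (\<lambda>g. cls f (varY * g)) (hom (n - 1))"
  proof (rule inj_onI)
    fix g g' assume "cls f (varY * g) = cls f (varY * g')"
    then obtain c where c: "varY * g = varY * g' + [:[:c:]:] * f" by (auto simp: cls_eq_iff)
    then have "bcoeff (varY * g) i 0 = bcoeff (varY * g' + [:[:c:]:] * f) i 0" by simp
    with fi have "c = 0" by (simp add: bcoeff_varY_mult)
    with c show "g = g'" by (simp add: varY_def)
  qed
  moreover have "(\<lambda>g. cls f (varY * g)) ` hom (n - 1) = cls f ` hom n"
  proof (intro equalityI subsetI)
    fix v assume "v \<in> (\<lambda>g. cls f (varY * g)) ` hom (n - 1)"
    then show "v \<in> cls f ` hom n" by (auto simp: varY_mult_in_hom_iff)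
  next
    fix v assume "v \<in> cls f ` hom n"
    then obtain h where h: "h \<in> hom n" "v = cls f h" by blast
    obtain c where hom: "h + [:[:c:]:] * f \<in> hom n"
      and row: "\<And>i'. bcoeff (h + [:[:c:]:] * f) i' 0 = 0" and "\<And>j'. bcoeff (h + [:[:c:]:] * f) i j' = 0"
      using hom_eliminate[OF f h(1) fi] by blast
    from row have "varY dvd h + [:[:c:]:] * f" unfolding varY_dvd_iff by blast
    then obtain g where g: "h + [:[:c:]:] * f = varY * g" by (rule dvdE)
    with hom have "g \<in> hom (n - 1)" by (simp add: varY_mult_in_hom_iff[symmetric])
    moreover have "cls f (varY * g) = v" unfolding h(2) cls_eq_iff g[symmetric] by blast
    ultimately show "v \<in> (\<lambda>g. cls f (varY * g)) ` hom (n - 1)" by blast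
  qed
  ultimately show ?thesis by (simp add: quiverR_def bij_betw_def)
qed

lemma varY_power_if_not_bij_head:
  fixes p f :: "'a::field poly poly"
  assumes "irreducible p" and "f = p ^ d" and "f \<in> hom n"
    and "\<not> bij_betw (head (quiverR n f)) (arcs (quiverR n f)) (verts (quiverR n f))"
  obtains C where "C \<noteq> 0" and "f = [:[:C:]:] * varY ^ d" and "n = int d"
proof -
  have "varY dvd f" using bij_head_if_not_varY_dvd assms(3,4) by blast
  then have "varY dvd p" using prime_elem_dvd_power[OF prime_elem_varY] assms(2) by blast
  then obtain c where c: "c \<noteq> 0" "p = [:[:c:]:] * varY" using irreducible_varY_dvd assms(1) by blast
  then have f: "f = [:[:c ^ d:]:] * varY ^ d" using assms(2) by (simp add: smult_power poly_const_pow)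
  then have "bcoeff f 0 d \<noteq> 0" using c by (simp add: bcoeff_varY_power)
  then have "int (0 + d) = n" using assms(3) unfolding hom_iff by blast
  with c f show ?thesis by (intro that[of "c ^ d"]) simp_all
qed

section \<open>The quiver of a power of y\<close>

definition yorder :: "nat \<Rightarrow> 'a::zero poly poly \<Rightarrow> nat" where
  "yorder N P = (LEAST j. N \<le> j \<or> coeff P j \<noteq> 0)"

lemma coeff_less_yorder: "j < yorder N P \<Longrightarrow> coeff P j = 0"
  unfolding yorder_def by (auto dest: not_less_Least)

lemma coeff_yorder: "yorder N P < N \<Longrightarrow> coeff P (yorder N P) \<noteq> 0"
  using LeastI[of "\<lambda>j. N \<le> j \<or> coeff P j \<noteq> 0" N] by (auto simp: yorder_def)

lemma yorder_less: "coeff P j \<noteq> 0 \<Longrightarrow> j < N \<Longrightarrow> yorder N P < N"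
  using Least_le[of "\<lambda>j. N \<le> j \<or> coeff P j \<noteq> 0" j] by (simp add: yorder_def)

lemma yorder_eqI:
  assumes "k \<le> N" and "k < N \<Longrightarrow> coeff P k \<noteq> 0" and "\<And>j. j < k \<Longrightarrow> coeff P j = 0"
  shows "yorder N P = k"
  unfolding yorder_def
proof (rule Least_equality)
  show "N \<le> k \<or> coeff P k \<noteq> 0" using assms(2) by (cases "k < N") auto
  fix j assume "N \<le> j \<or> coeff P j \<noteq> 0"
  with assms(1,3) show "k \<le> j" by (meson le_trans linorder_not_le)
qed

lemma yorder_eq_0: "coeff P 0 \<noteq> 0 \<Longrightarrow> yorder N P = 0"
  by (rule yorder_eqI) simp_all

lemma yorder_0: "yorder N 0 = N"
  by (rule yorder_eqI) simp_all

lemma yorder_cong: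
  assumes "\<And>j. j < N \<Longrightarrow> coeff P j = coeff Q j"
  shows "yorder N P = yorder N Q"
proof -
  have "(\<lambda>j. N \<le> j \<or> coeff P j \<noteq> 0) = (\<lambda>j. N \<le> j \<or> coeff Q j \<noteq> 0)"
    using assms by (auto simp: fun_eq_iff not_le)
  then show ?thesis by (simp add: yorder_def)
qed

lemma yorder_varX_mult: "yorder N (varX * P) = yorder N (P :: 'a::idom poly poly)"
  by (simp add: yorder_def varX_def)

lemma yorder_varY_mult:
  assumes "yorder N P < N"
  shows "yorder N (varY * P) = Suc (yorder N P)"
proof (rule yorder_eqI)
  show "Suc (yorder N P) \<le> N" using assms by simp
  show "coeff (varY * P) (Suc (yorder N P)) \<noteq> 0"
    using coeff_yorder[OF assms] by (simp add: varY_def)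
  show "coeff (varY * P) j = 0" if "j < Suc (yorder N P)" for j
    using that coeff_less_yorder[of "j - 1" N P] by (cases j) (simp_all add: varY_def)
qed

lemma two_le_card_field: "2 \<le> card (UNIV :: 'a::{field,finite} set)"
proof -
  have "card {0, 1 :: 'a} \<le> card (UNIV :: 'a set)" by (intro card_mono) simp_all
  then show ?thesis by simp
qed

locale varY_power_quiver =
  fixes F :: "'a::{field,finite} poly poly" and d :: nat
  assumes F_def: "F = varY ^ d" and d_pos: "1 \<le> d"
begin

abbreviation G :: "('a poly poly set, 'a poly poly) pre_digraph" where
  "G \<equiv> quiverR (int d) F"

abbreviation root :: "'a poly poly set" where
  "root \<equiv> cls F 0"

abbreviation H :: "('a poly poly set, 'a poly poly) pre_digraph" where
  "H \<equiv> pre_digraph.del_arc G 0"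

lemma H_simps [simp]:
  "verts H = cls F ` hom (int d)" "arcs H = hom (int d - 1) - {0}"
  "tail H = (\<lambda>g. cls F (varX * g))" "head H = (\<lambda>g. cls F (varY * g))"
  by (simp_all add: quiverR_def pre_digraph.del_arc_def)

lemma bcoeff_F: "bcoeff F i j = (if i = 0 \<and> j = d then 1 else 0)"
  unfolding F_def by (rule bcoeff_varY_power)

lemma F_in_hom: "F \<in> hom (int d)"
  unfolding F_def by (rule varY_power_in_hom)

lemma coeff_F: "j \<noteq> d \<Longrightarrow> coeff F j = 0"
  using bcoeff_F by (simp add: bcoeff_def poly_eq_iff)

lemma varY_mult_varY_power: "varY * varY ^ (d - 1) = F"
  using d_pos by (simp add: F_def power_eq_if[of _ d])

lemma yorder_add_F: "yorder d (h + [:[:c:]:] * F) = yorder d h"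
  by (rule yorder_cong) (simp add: coeff_F)

text \<open>The depth of a vertex is its distance from the root; it is well defined because the
  representatives of a vertex differ by multiples of y^d.\<close>
definition depth :: "'a poly poly set \<Rightarrow> nat" where
  "depth v = d - yorder d (SOME h. h \<in> v)"

lemma depth_cls: "depth (cls F h) = d - yorder d h"
proof -
  have "(SOME h'. h' \<in> cls F h) \<in> cls F h" using self_in_cls by (rule someI)
  then obtain c where "(SOME h'. h' \<in> cls F h) = h + [:[:c:]:] * F" by (auto simp: cls_def)
  then show ?thesis using yorder_add_F[of h c] by (simp add: depth_def)
qed

lemma yorder_arc_less: "e \<in> hom (int d - 1) \<Longrightarrow> e \<noteq> 0 \<Longrightarrow> yorder d e < d"
proof -
  assume e: "e \<in> hom (int d - 1)" "e \<noteq> 0"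
  then obtain i j where ij: "bcoeff e i j \<noteq> 0" by (auto simp: poly_poly_eq_iff)
  with e(1) have "int (i + j) = int d - 1" unfolding hom_iff by blast
  then have "j < d" by presburger
  moreover from ij have "coeff e j \<noteq> 0" by (auto simp: bcoeff_def)
  ultimately show ?thesis by (intro yorder_less)
qed

lemma depth_tail:
  "e \<in> hom (int d - 1) \<Longrightarrow> e \<noteq> 0 \<Longrightarrow> depth (cls F (varX * e)) = Suc (depth (cls F (varY * e)))"
  using yorder_arc_less[of e] by (simp add: depth_cls yorder_varX_mult yorder_varY_mult Suc_diff_Suc)

lemma loop_arcs: "{a \<in> arcs G. tail G a = head G a} = {0}"
proof -
  have "a = 0" if "a \<in> hom (int d - 1)" "cls F (varX * a) = cls F (varY * a)" for a
    using depth_tail[OF that(1)] that(2) by (metis n_not_Suc_n)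
  then show ?thesis by (auto simp: quiverR_def zero_in_hom)
qed

lemma inj_tail: "inj (\<lambda>e. cls F (varX * e))"
proof (rule injI)
  fix e e' assume "cls F (varX * e) = cls F (varX * e')"
  then obtain c where c: "varX * e = varX * e' + [:[:c:]:] * F" by (auto simp: cls_eq_iff)
  then have "bcoeff (varX * e) 0 d = bcoeff (varX * e' + [:[:c:]:] * F) 0 d" by simp
  then have "c = 0" by (simp add: bcoeff_varX_mult bcoeff_F)
  with c have "varX * e = varX * e'" by simp
  then show "e = e'" using mult_left_cancel[OF varX_nonzero] by blast
qed

lemma out_arc_exists:
  assumes h: "h \<in> hom (int d)" and "cls F h \<noteq> root"
  shows "\<exists>e \<in> hom (int d - 1) - {0}. cls F (varX * e) = cls F h"
proof -
  have F0d: "bcoeff F 0 d \<noteq> 0" by (simp add: bcoeff_F)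
  obtain c where hom: "h + [:[:c:]:] * F \<in> hom (int d)"
    and "\<And>i. bcoeff (h + [:[:c:]:] * F) i d = 0" and col: "\<And>j. bcoeff (h + [:[:c:]:] * F) 0 j = 0"
    using hom_eliminate[OF F_in_hom h F0d] by blast
  from col have "varX dvd h + [:[:c:]:] * F" unfolding varX_dvd_iff by blast
  then obtain e where e: "h + [:[:c:]:] * F = varX * e" by (rule dvdE)
  with hom have "e \<in> hom (int d - 1)" by (simp add: varX_mult_in_hom_iff[symmetric])
  moreover have cls_e: "cls F (varX * e) = cls F h" unfolding cls_eq_iff e[symmetric] by blast
  moreover from cls_e assms(2) have "e \<noteq> 0" by auto
  ultimately show ?thesis by blast
qed

sublocale tree: ranked_in_tree H root depth
proof
  show "e \<in> arcs H \<Longrightarrow> tail H e \<in> verts H" "e \<in> arcs H \<Longrightarrow> head H e \<in> verts H" for e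
    by (auto simp: varX_mult_in_hom_iff varY_mult_in_hom_iff)
  show "root \<in> verts H" unfolding H_simps by (rule imageI[OF zero_in_hom])
  show "inj_on (tail H) (arcs H)" unfolding H_simps by (rule inj_on_subset[OF inj_tail subset_UNIV])
  show "depth root = 0" by (simp add: depth_cls yorder_0)
  show "v \<in> verts H \<Longrightarrow> v \<noteq> root \<Longrightarrow> \<exists>e\<in>arcs H. tail H e = v" for v
    using out_arc_exists by auto
  show "e \<in> arcs H \<Longrightarrow> depth (tail H e) = Suc (depth (head H e))" for e
    using depth_tail by auto
qed

lemma in_arcs_H: "in_arcs H v = {g \<in> hom (int d - 1). cls F (varY * g) = v} - {0}"
  by (auto simp: in_arcs_def)

lemma head_fibre:
  assumes g: "g \<in> hom (int d - 1)"
  shows "{g' \<in> hom (int d - 1). cls F (varY * g') = cls F (varY * g)}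
    = range (\<lambda>c. g + [:[:c:]:] * varY ^ (d - 1))"
proof -
  have Y: "varY * (g + [:[:c:]:] * varY ^ (d - 1)) = varY * g + [:[:c:]:] * F" for c
    using varY_mult_varY_power by (simp add: distrib_left mult.left_commute)
  have "cls F (varY * g') = cls F (varY * g) \<longleftrightarrow> (\<exists>c. g' = g + [:[:c:]:] * varY ^ (d - 1))" for g'
    unfolding cls_eq_iff Y[symmetric] by (simp add: varY_def)
  moreover have "g + [:[:c:]:] * varY ^ (d - 1) \<in> hom (int d - 1)" for c
    using varY_power_in_hom[of "d - 1"] d_pos by (intro hom_add hom_const_mult g) (simp add: of_nat_diff)
  ultimately show ?thesis by auto
qed

lemma card_head_fibre:
  fixes g :: "'a poly poly"
  shows "card (range (\<lambda>c. g + [:[:c:]:] * varY ^ (d - 1))) = card (UNIV :: 'a set)"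
proof -
  have "inj (\<lambda>c. g + [:[:c:]:] * varY ^ (d - 1))"
  proof (rule injI)
    fix a b assume "g + [:[:a:]:] * varY ^ (d - 1) = g + [:[:b:]:] * varY ^ (d - 1)"
    then have "bcoeff ([:[:a:]:] * varY ^ (d - 1)) 0 (d - 1) = bcoeff ([:[:b:]:] * varY ^ (d - 1)) 0 (d - 1)"
      by simp
    then show "a = b" by (simp add: bcoeff_varY_power)
  qed
  then show ?thesis by (rule card_image)
qed

lemma in_degree_root: "in_degree H root = card (UNIV :: 'a set) - 1"
proof -
  let ?fibre = "range (\<lambda>c. (0 :: 'a poly poly) + [:[:c:]:] * varY ^ (d - 1))"
  have "in_arcs H root = ?fibre - {0}"
    using head_fibre[OF zero_in_hom] by (simp add: in_arcs_H)
  moreover have "0 \<in> ?fibre" by (rule range_eqI[of _ _ 0]) simp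
  moreover have "finite ?fibre" by (rule finite_imageI) simp
  ultimately show ?thesis using card_head_fibre[of 0] by (simp add: in_degree_def card_Diff_singleton)
qed

lemma in_degree_if_varY_dvd:
  assumes "h \<in> hom (int d)" and "coeff h 0 = 0" and "cls F h \<noteq> root"
  shows "in_degree H (cls F h) = card (UNIV :: 'a set)"
proof -
  have "varY dvd h" using assms(2) by (simp add: varY_dvd_iff_coeff_0)
  then obtain g where g: "h = varY * g" by (rule dvdE)
  with assms(1) have g_hom: "g \<in> hom (int d - 1)" by (simp add: varY_mult_in_hom_iff)
  have "cls F (varY * 0) \<noteq> cls F h" using assms(3) by simp
  then have "in_arcs H (cls F h) = range (\<lambda>c. g + [:[:c:]:] * varY ^ (d - 1))"
    using head_fibre[OF g_hom] unfolding in_arcs_H g by blast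
  then show ?thesis using card_head_fibre by (simp add: in_degree_def)
qed

lemma in_degree_if_not_varY_dvd:
  assumes "coeff h 0 \<noteq> 0"
  shows "in_degree H (cls F h) = 0"
proof -
  have "cls F (varY * g) \<noteq> cls F h" for g
  proof
    assume "cls F (varY * g) = cls F h"
    then obtain c where "varY * g = h + [:[:c:]:] * F" by (auto simp: cls_eq_iff)
    then have "coeff (varY * g) 0 = coeff (h + [:[:c:]:] * F) 0" by simp
    with assms d_pos show False by (simp add: varY_def coeff_F)
  qed
  then show ?thesis by (simp add: in_degree_def in_arcs_H)
qed

lemma in_degree_nonroot:
  assumes "v \<in> verts H" and "v \<noteq> root"
  shows "in_degree H v = card (UNIV :: 'a set) \<or> in_degree H v = 0"
proof -
  obtain h where h: "h \<in> hom (int d)" "v = cls F h" using assms(1) by auto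
  show ?thesis
  proof (cases "coeff h 0 = 0")
    case True
    with h assms(2) show ?thesis using in_degree_if_varY_dvd by simp
  next
    case False
    with h(2) show ?thesis using in_degree_if_not_varY_dvd by simp
  qed
qed

lemma depth_if_in_degree_0:
  assumes v: "v \<in> verts H" and in0: "in_degree H v = 0"
  shows "depth v = d"
proof -
  obtain h where h: "h \<in> hom (int d)" "v = cls F h" using v by auto
  have card: "card (UNIV :: 'a set) \<noteq> 0" "card (UNIV :: 'a set) - 1 \<noteq> 0"
    using two_le_card_field[where 'a = 'a] by simp_all
  with in0 in_degree_root have "v \<noteq> root" by auto
  have "coeff h 0 \<noteq> 0"
  proof
    assume "coeff h 0 = 0"
    with h \<open>v \<noteq> root\<close> have "in_degree H v = card (UNIV :: 'a set)"
      using in_degree_if_varY_dvd by simp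
    with in0 card(1) show False by simp
  qed
  then show ?thesis by (simp add: h(2) depth_cls yorder_eq_0)
qed

end

theorem mainTheorem6:
  fixes p f :: "'a::{field,finite} poly poly" and m n :: int and d q :: nat
  assumes "card (UNIV :: 'a set) = q" and "p \<in> hom m" and "irreducible p" and "d \<ge> 1"
    and "f = p ^ d" and "f \<in> hom n"
    and "\<not> bij_betw (head (quiverR n f)) (arcs (quiverR n f)) (verts (quiverR n f))"
  shows "\<exists>l. {a \<in> arcs (quiverR n f). tail (quiverR n f) a = head (quiverR n f) a} = {l}
           \<and> tail (quiverR n f) l = cls f 0
           \<and> (let H = pre_digraph.del_arc (quiverR n f) l; z = cls f 0 in
                directed_tree H
              \<and> out_degree H z = 0
              \<and> (\<forall>v \<in> verts H. v \<noteq> z \<longrightarrow> out_degree H v = 1)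
              \<and> (\<forall>v \<in> verts H. v \<noteq> z \<longrightarrow> in_degree H v = q \<or> in_degree H v = 0)
              \<and> in_degree H z = q - 1
              \<and> (\<forall>v \<in> verts H. in_degree H v = 0 \<longrightarrow>
                   (\<exists>P. pre_digraph.apath H v P z \<and> length P = d
                        \<and> (\<forall>P'. pre_digraph.apath H v P' z \<longrightarrow> P' = P))))"
proof -
  obtain C where C: "C \<noteq> 0" "f = [:[:C:]:] * varY ^ d" and n: "n = int d"
    by (rule varY_power_if_not_bij_head[OF assms(3,5,6,7)])
  interpret varY_power_quiver "varY ^ d :: 'a poly poly" d using assms(4) by unfold_locales simp_all
  have G: "quiverR n f = G" and z: "cls f 0 = root"
    using quiverR_const_mult[OF C(1)] cls_const_mult[OF C(1)] by (simp_all add: n C(2))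
  show ?thesis unfolding G z Let_def
  proof (intro exI[of _ 0] conjI ballI impI)
    show "{a \<in> arcs G. tail G a = head G a} = {0}" by (rule loop_arcs)
    show "tail G 0 = root" by (simp add: quiverR_def)
    show "directed_tree H" by (rule tree.directed_tree)
    show "out_degree H root = 0" by (rule tree.out_degree_root)
    show "in_degree H root = q - 1" using in_degree_root assms(1) by simp
    show "out_degree H v = 1" if "v \<in> verts H" "v \<noteq> root" for v
      using tree.out_degree_nonroot that .
    show "in_degree H v = q \<or> in_degree H v = 0" if "v \<in> verts H" "v \<noteq> root" for v
      using in_degree_nonroot[OF that] assms(1) by simp
    show "\<exists>P. tree.apath v P root \<and> length P = d \<and> (\<forall>P'. tree.apath v P' root \<longrightarrow> P' = P)"
      if "v \<in> verts H" "in_degree H v = 0" for v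
      using tree.apath_to_root[OF that(1)] depth_if_in_degree_0[OF that] by simp
  qed
qed

end
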